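(* Let $X,Y$ be metric vector spaces over $K$ with metrics $d_X,d_Y$, where $d_Y$ is translation invariant, and let $F:X\to Y$ be a linear mapping. (a) If $F\in B_d(X,Y)$, then $F$ is continuous. Conversely, suppose $F$ is continuous, $d_X$ is translation invariant and scale bounded on $X$ with constants $C_\alpha=M(\alpha)|\alpha|$ where $M$ is a positive bounded function on $K$, and $Y$ is a normed space whose metric $d_Y$ is the one induced by its norm. Then $F\in B_d(X,Y)$. (b) If $d_X$ is translation invariant and $F$ is continuous at a single point, then $F$ is continuous.
   Context: $K$ is $\mathbb{R}$ or $\mathbb{C}$. For maps $F_1,F_2:X\to Y$, $d(F_1,F_2)=\max\left\{\sup_{x\neq0,x\in X}\frac{d_Y[F_1(x),F_2(x)]}{d_X(x,0)},\ d_Y[F_1(0),F_2(0)]\right\}$, and $B_d(X,Y)$ is the set of maps $F:X\to Y$ with $d(F,0)<\infty$. A translation invariant metric $d_X$ is scale bounded on $X$ if for every $\alpha\in K$ there is a positive number $C_\alpha$ with $d_X(\alpha s,0)\le C_\alpha d_X(s,0)$ for all $s\in X$. *)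

theory Defs
  imports Complex_Main "HOL-Library.Extended_Real"
begin

text \<open>The scalar field K: a normed field which is (a copy of) the reals or the complex numbers.\<close>
class real_or_complex = real_normed_field +
  assumes real_or_complex:
    "(\<forall>x. \<exists>a. x = a *\<^sub>R 1) \<or>
     (\<exists>i. i * i = -1 \<and> (\<forall>x. \<exists>a b. x = a *\<^sub>R 1 + b *\<^sub>R i))"

instance real :: real_or_complex
  by standard auto

instance complex :: real_or_complex
proof
  show "(\<forall>x::complex. \<exists>a. x = a *\<^sub>R 1) \<or>
     (\<exists>i::complex. i * i = -1 \<and> (\<forall>x. \<exists>a b. x = a *\<^sub>R 1 + b *\<^sub>R i))"
  proof (rule disjI2, rule exI[of _ "\<i>"], intro conjI allI)
    fix x :: complex
    show "\<exists>a b. x = a *\<^sub>R 1 + b *\<^sub>R \<i>"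
      by (rule exI[of _ "Re x"], rule exI[of _ "Im x"]) (simp add: complex_eq_iff)
  qed simp
qed

definition metric_on :: "('a \<Rightarrow> 'a \<Rightarrow> real) \<Rightarrow> bool" where
  "metric_on d \<longleftrightarrow> (\<forall>x y. 0 \<le> d x y) \<and> (\<forall>x y. d x y = 0 \<longleftrightarrow> x = y) \<and>
     (\<forall>x y. d x y = d y x) \<and> (\<forall>x y z. d x z \<le> d x y + d y z)"

definition metric_vector_space ::
  "('k::real_normed_field \<Rightarrow> 'a::ab_group_add \<Rightarrow> 'a) \<Rightarrow> ('a \<Rightarrow> 'a \<Rightarrow> real) \<Rightarrow> bool" where
  "metric_vector_space s d \<longleftrightarrow> vector_space s \<and> metric_on d \<and>
     (\<forall>x y e. e > 0 \<longrightarrow> (\<exists>\<delta>>0. \<forall>x' y'. d x' x < \<delta> \<and> d y' y < \<delta> \<longrightarrow> d (x' + y') (x + y) < e)) \<and>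
     (\<forall>a x e. e > 0 \<longrightarrow> (\<exists>\<delta>>0. \<forall>a' x'. norm (a' - a) < \<delta> \<and> d x' x < \<delta> \<longrightarrow> d (s a' x') (s a x) < e))"

definition translation_invariant :: "('a::ab_group_add \<Rightarrow> 'a \<Rightarrow> real) \<Rightarrow> bool" where
  "translation_invariant d \<longleftrightarrow> (\<forall>x y z. d (x + z) (y + z) = d x y)"

definition scale_bounded :: "('k \<Rightarrow> 'a::zero \<Rightarrow> 'a) \<Rightarrow> ('a \<Rightarrow> 'a \<Rightarrow> real) \<Rightarrow> bool" where
  "scale_bounded s d \<longleftrightarrow> (\<forall>\<alpha>. \<exists>C>0. \<forall>x. d (s \<alpha> x) 0 \<le> C * d x 0)"

definition mcont_at :: "('a \<Rightarrow> 'a \<Rightarrow> real) \<Rightarrow> ('b \<Rightarrow> 'b \<Rightarrow> real) \<Rightarrow> ('a \<Rightarrow> 'b) \<Rightarrow> 'a \<Rightarrow> bool" where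
  "mcont_at dX dY f x \<longleftrightarrow> (\<forall>e>0. \<exists>\<delta>>0. \<forall>y. dX y x < \<delta> \<longrightarrow> dY (f y) (f x) < e)"

definition mcont :: "('a \<Rightarrow> 'a \<Rightarrow> real) \<Rightarrow> ('b \<Rightarrow> 'b \<Rightarrow> real) \<Rightarrow> ('a \<Rightarrow> 'b) \<Rightarrow> bool" where
  "mcont dX dY f \<longleftrightarrow> (\<forall>x. mcont_at dX dY f x)"

definition map_dist ::
  "('a::zero \<Rightarrow> 'a \<Rightarrow> real) \<Rightarrow> ('b \<Rightarrow> 'b \<Rightarrow> real) \<Rightarrow> ('a \<Rightarrow> 'b) \<Rightarrow> ('a \<Rightarrow> 'b) \<Rightarrow> ereal" where
  "map_dist dX dY F1 F2 =
     max (SUP x\<in>{x. x \<noteq> 0}. ereal (dY (F1 x) (F2 x) / dX x 0)) (ereal (dY (F1 0) (F2 0)))"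

definition Bd :: "('a::zero \<Rightarrow> 'a \<Rightarrow> real) \<Rightarrow> ('b::zero \<Rightarrow> 'b \<Rightarrow> real) \<Rightarrow> ('a \<Rightarrow> 'b) set" where
  "Bd dX dY = {F. map_dist dX dY F (\<lambda>_. 0) < \<infinity>}"

definition norm_on :: "('k::real_normed_field \<Rightarrow> 'b::ab_group_add \<Rightarrow> 'b) \<Rightarrow> ('b \<Rightarrow> real) \<Rightarrow> bool" where
  "norm_on s n \<longleftrightarrow> (\<forall>y. 0 \<le> n y) \<and> (\<forall>y. n y = 0 \<longleftrightarrow> y = 0) \<and>
     (\<forall>y z. n (y + z) \<le> n y + n z) \<and> (\<forall>a y. n (s a y) = norm a * n y)"

end

theory Submission
  imports Defs
begin

text \<open>For a linear map into a translation invariant space, membership in \<open>B\<^sub>d\<close> just means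
  \<open>d\<^sub>Y(F x, 0) \<le> C d\<^sub>X(x, 0)\<close>. Such a bound gives continuity at \<open>0\<close>, and continuity at one point
  spreads everywhere because \<open>d\<^sub>Y(F y, F x) = d\<^sub>Y(F (y - x), F 0)\<close>; in \<open>X\<close> one only needs that
  \<open>y - x \<rightarrow> 0\<close> as \<open>y \<rightarrow> x\<close>, which follows from continuity of addition, or from translation
  invariance of \<open>d\<^sub>X\<close> when \<open>F\<close> is continuous at an arbitrary point \<open>x\<^sub>0\<close>.
  Conversely, if \<open>Y\<close> is normed and \<open>F\<close> is continuous at \<open>0\<close>, rescaling \<open>x \<noteq> 0\<close> by a real
  \<open>r \<sim> \<delta>/d\<^sub>X(x,0)\<close> brings it into the \<open>\<delta>\<close>-ball, and homogeneity of the norm of \<open>Y\<close> turns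
  \<open>\<parallel>F (r x)\<parallel> < 1\<close> into the required linear bound.\<close>

lemma metric_on_self: "metric_on d \<Longrightarrow> d x x = 0"
  unfolding metric_on_def by auto

lemma metric_on_nonneg: "metric_on d \<Longrightarrow> 0 \<le> d x y"
  unfolding metric_on_def by auto

lemma metric_on_pos: "metric_on d \<Longrightarrow> x \<noteq> y \<Longrightarrow> 0 < d x y"
  unfolding metric_on_def by (metis order_le_less)

lemma translation_invariant_diff:
  assumes "translation_invariant d"
  shows "d x y = d (x - y) 0"
  using assms unfolding translation_invariant_def by (metis add_0 diff_add_cancel)

lemma metric_vector_space_diff_tendsto_zero:
  assumes "metric_vector_space s d" "e > 0"
  obtains \<delta> where "\<delta> > 0" "\<And>y. d y x < \<delta> \<Longrightarrow> d (y - x) 0 < e"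
proof -
  have "metric_on d"
    using assms(1) unfolding metric_vector_space_def by auto
  obtain \<delta> where "\<delta> > 0" and \<delta>: "\<And>y y'. d y x < \<delta> \<and> d y' (-x) < \<delta> \<longrightarrow> d (y + y') (x + - x) < e"
    using assms unfolding metric_vector_space_def by blast
  then show thesis
    using that[of \<delta>] \<delta>[of _ "-x"] metric_on_self[OF \<open>metric_on d\<close>] by simp
qed

lemma Bd_iff_linear_bound:
  assumes "metric_on dX"
  shows "F \<in> Bd dX dY \<longleftrightarrow> (\<exists>C. \<forall>x. x \<noteq> 0 \<longrightarrow> dY (F x) 0 \<le> C * dX x 0)"
proof
  assume "F \<in> Bd dX dY"
  then obtain n :: nat where n: "map_dist dX dY F (\<lambda>_. 0) < ereal (real n)"
    unfolding Bd_def using less_PInf_Ex_of_nat by auto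
  have "dY (F x) 0 \<le> real n * dX x 0" if "x \<noteq> 0" for x
  proof -
    have "ereal (dY (F x) 0 / dX x 0) \<le> (SUP x\<in>{x. x \<noteq> 0}. ereal (dY (F x) 0 / dX x 0))"
      using that by (intro SUP_upper) auto
    also have "\<dots> \<le> map_dist dX dY F (\<lambda>_. 0)"
      unfolding map_dist_def by simp
    finally have "ereal (dY (F x) 0 / dX x 0) < ereal (real n)"
      using n by (rule le_less_trans)
    then have "dY (F x) 0 / dX x 0 < real n" by simp
    then show ?thesis
      using metric_on_pos[OF assms that] by (simp add: divide_less_eq)
  qed
  then show "\<exists>C. \<forall>x. x \<noteq> 0 \<longrightarrow> dY (F x) 0 \<le> C * dX x 0" by blast
next
  assume "\<exists>C. \<forall>x. x \<noteq> 0 \<longrightarrow> dY (F x) 0 \<le> C * dX x 0"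
  then obtain C where C: "\<And>x. x \<noteq> 0 \<Longrightarrow> dY (F x) 0 \<le> C * dX x 0" by blast
  have "(SUP x\<in>{x. x \<noteq> 0}. ereal (dY (F x) 0 / dX x 0)) \<le> ereal C"
    using C metric_on_pos[OF assms] by (intro SUP_least) (simp add: divide_le_eq mult.commute)
  then have "map_dist dX dY F (\<lambda>_. 0) \<le> max (ereal C) (ereal (dY (F 0) 0))"
    unfolding map_dist_def by (rule max.mono) simp
  also have "\<dots> < \<infinity>" by (simp add: max_def)
  finally show "F \<in> Bd dX dY"
    unfolding Bd_def by simp
qed

lemma linear_bound_imp_mcont_at_zero:
  assumes "metric_on dX" "metric_on dY" "Vector_Spaces.linear sX sY F"
    and C: "\<And>x. x \<noteq> 0 \<Longrightarrow> dY (F x) 0 \<le> C * dX x 0"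
  shows "mcont_at dX dY F 0"
  unfolding mcont_at_def
proof (intro allI impI)
  interpret L: Vector_Spaces.linear sX sY F by fact
  fix e :: real assume "e > 0"
  show "\<exists>\<delta>>0. \<forall>y. dX y 0 < \<delta> \<longrightarrow> dY (F y) (F 0) < e"
  proof (intro exI[of _ "e / (\<bar>C\<bar> + 1)"] conjI allI impI)
    fix y assume y: "dX y 0 < e / (\<bar>C\<bar> + 1)"
    show "dY (F y) (F 0) < e"
    proof (cases "y = 0")
      case True
      then show ?thesis using \<open>e > 0\<close> metric_on_self[OF assms(2)] by simp
    next
      case False
      have "dY (F y) (F 0) \<le> \<bar>C\<bar> * dX y 0"
        using C[OF False] metric_on_nonneg[OF assms(1), of y 0]
        by (simp add: order_trans[OF _ mult_right_mono])
      also have "\<dots> \<le> \<bar>C\<bar> * (e / (\<bar>C\<bar> + 1))"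
        using y by (intro mult_left_mono) auto
      also have "\<dots> < e"
        using \<open>e > 0\<close> by (simp add: field_simps)
      finally show ?thesis .
    qed
  qed (use \<open>e > 0\<close> in simp)
qed

lemma linear_mcont_at_zero_imp_mcont:
  assumes X: "metric_vector_space sX dX" and "translation_invariant dY"
    and "Vector_Spaces.linear sX sY F" and cont: "mcont_at dX dY F 0"
  shows "mcont dX dY F"
  unfolding mcont_def mcont_at_def
proof (intro allI impI)
  interpret L: Vector_Spaces.linear sX sY F by fact
  fix x and e :: real assume "e > 0"
  then obtain \<epsilon> where "\<epsilon> > 0" and \<epsilon>: "\<And>y. dX y 0 < \<epsilon> \<Longrightarrow> dY (F y) (F 0) < e"
    using cont unfolding mcont_at_def by blast
  obtain \<delta> where "\<delta> > 0" and \<delta>: "\<And>y. dX y x < \<delta> \<Longrightarrow> dX (y - x) 0 < \<epsilon>"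
    using metric_vector_space_diff_tendsto_zero[OF X \<open>\<epsilon> > 0\<close>] by blast
  have "dY (F y) (F x) < e" if "dX y x < \<delta>" for y
    using \<epsilon>[OF \<delta>[OF that]] translation_invariant_diff[OF \<open>translation_invariant dY\<close>]
    by (metis L.diff L.zero)
  then show "\<exists>\<delta>>0. \<forall>y. dX y x < \<delta> \<longrightarrow> dY (F y) (F x) < e"
    using \<open>\<delta> > 0\<close> by blast
qed

lemma linear_mcont_at_imp_mcont_at_zero:
  assumes "translation_invariant dX" "translation_invariant dY"
    and "Vector_Spaces.linear sX sY F" and cont: "mcont_at dX dY F x0"
  shows "mcont_at dX dY F 0"
  unfolding mcont_at_def
proof (intro allI impI)
  interpret L: Vector_Spaces.linear sX sY F by fact
  fix e :: real assume "e > 0"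
  then obtain \<delta> where "\<delta> > 0" and \<delta>: "\<And>y. dX y x0 < \<delta> \<Longrightarrow> dY (F y) (F x0) < e"
    using cont unfolding mcont_at_def by blast
  have "dY (F y) (F 0) < e" if "dX y 0 < \<delta>" for y
  proof -
    have "dX (y + x0) x0 < \<delta>"
      using that translation_invariant_diff[OF assms(1), of "y + x0" x0] by simp
    then have "dY (F (y + x0)) (F x0) < e" by (rule \<delta>)
    then show ?thesis
      using translation_invariant_diff[OF assms(2), of "F y + F x0" "F x0"]
        translation_invariant_diff[OF assms(2), of "F y" "F 0"]
      by (simp add: L.add L.zero)
  qed
  then show "\<exists>\<delta>>0. \<forall>y. dX y 0 < \<delta> \<longrightarrow> dY (F y) (F 0) < e"
    using \<open>\<delta> > 0\<close> by blast
qed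

lemma linear_bound_of_mcont_at_zero_normed:
  fixes sX :: "'k::real_normed_field \<Rightarrow> 'a::ab_group_add \<Rightarrow> 'a"
  assumes "metric_on dX" "Vector_Spaces.linear sX sY F"
    and nY: "norm_on sY nY" "\<And>y z. dY y z = nY (y - z)"
    and "B > 0" and scale: "\<And>\<alpha> x. dX (sX \<alpha> x) 0 \<le> B * norm \<alpha> * dX x 0"
    and cont: "mcont_at dX dY F 0"
  shows "\<exists>C. \<forall>x. x \<noteq> 0 \<longrightarrow> dY (F x) 0 \<le> C * dX x 0"
proof -
  interpret L: Vector_Spaces.linear sX sY F by fact
  obtain \<delta> where "\<delta> > 0" and \<delta>: "\<And>y. dX y 0 < \<delta> \<Longrightarrow> dY (F y) (F 0) < 1"
    using cont unfolding mcont_at_def by (meson zero_less_one)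
  have "dY (F x) 0 \<le> 2 * B / \<delta> * dX x 0" if "x \<noteq> 0" for x
  proof -
    define t where "t = dX x 0"
    define r where "r = \<delta> / (2 * B * t)"
    have "t > 0" "r > 0"
      using metric_on_pos[OF assms(1) that] \<open>\<delta> > 0\<close> \<open>B > 0\<close> by (simp_all add: t_def r_def)
    have "dX (sX (of_real r) x) 0 \<le> B * r * t"
      using scale[of "of_real r" x] \<open>r > 0\<close> by (simp add: t_def)
    also have "\<dots> < \<delta>"
      using \<open>\<delta> > 0\<close> \<open>B > 0\<close> \<open>t > 0\<close> by (simp add: r_def field_simps)
    finally have "dY (F (sX (of_real r) x)) (F 0) < 1" by (rule \<delta>)
    then have "r * nY (F x) < 1"
      using nY \<open>r > 0\<close> unfolding norm_on_def by (simp add: L.scale L.zero)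
    then have "nY (F x) < 1 / r"
      using \<open>r > 0\<close> by (simp add: field_simps)
    also have "1 / r = 2 * B / \<delta> * t"
      by (simp add: r_def)
    finally have "nY (F x) < 2 * B / \<delta> * t" .
    then show ?thesis
      using nY(2) by (simp add: t_def)
  qed
  then show ?thesis by blast
qed

theorem theorem9:
  fixes sX :: "'k::real_or_complex \<Rightarrow> 'a::ab_group_add \<Rightarrow> 'a"
    and sY :: "'k \<Rightarrow> 'b::ab_group_add \<Rightarrow> 'b"
    and dX :: "'a \<Rightarrow> 'a \<Rightarrow> real" and dY :: "'b \<Rightarrow> 'b \<Rightarrow> real"
    and F :: "'a \<Rightarrow> 'b"
  assumes "metric_vector_space sX dX" and "metric_vector_space sY dY"
    and "translation_invariant dY"
    and "Vector_Spaces.linear sX sY F"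
  shows "(F \<in> Bd dX dY \<longrightarrow> mcont dX dY F)
    \<and> ((mcont dX dY F \<and> translation_invariant dX \<and> scale_bounded sX dX
         \<and> (\<exists>M::'k \<Rightarrow> real. (\<forall>\<alpha>. 0 < M \<alpha>) \<and> (\<exists>B. \<forall>\<alpha>. M \<alpha> \<le> B)
              \<and> (\<forall>\<alpha> x. dX (sX \<alpha> x) 0 \<le> M \<alpha> * norm \<alpha> * dX x 0))
         \<and> (\<exists>nY. norm_on sY nY \<and> (\<forall>y z. dY y z = nY (y - z))))
       \<longrightarrow> F \<in> Bd dX dY)
    \<and> ((translation_invariant dX \<and> (\<exists>x0. mcont_at dX dY F x0)) \<longrightarrow> mcont dX dY F)"
proof (intro conjI impI; (elim conjE exE)?)
  have mX: "metric_on dX" and mY: "metric_on dY"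
    using assms(1,2) unfolding metric_vector_space_def by auto
  note to_mcont = linear_mcont_at_zero_imp_mcont[OF assms(1,3,4)]
  show "mcont dX dY F" if "F \<in> Bd dX dY"
    using that Bd_iff_linear_bound[OF mX] linear_bound_imp_mcont_at_zero[OF mX mY assms(4)] to_mcont
    by blast
  show "mcont dX dY F" if "translation_invariant dX" "mcont_at dX dY F x0" for x0
    using to_mcont linear_mcont_at_imp_mcont_at_zero[OF that(1) assms(3,4) that(2)] by blast
  fix M :: "'k \<Rightarrow> real" and B nY
  assume "mcont dX dY F" "\<forall>\<alpha>. 0 < M \<alpha>" "\<forall>\<alpha>. M \<alpha> \<le> B"
    and M: "\<forall>\<alpha> x. dX (sX \<alpha> x) 0 \<le> M \<alpha> * norm \<alpha> * dX x 0"
    and "norm_on sY nY" "\<forall>y z. dY y z = nY (y - z)"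
  have "B > 0"
    using \<open>\<forall>\<alpha>. 0 < M \<alpha>\<close> \<open>\<forall>\<alpha>. M \<alpha> \<le> B\<close> by (meson less_le_trans)
  have "dX (sX \<alpha> x) 0 \<le> B * norm \<alpha> * dX x 0" for \<alpha> x
    using M \<open>\<forall>\<alpha>. M \<alpha> \<le> B\<close> metric_on_nonneg[OF mX, of x 0]
    by (meson mult_right_mono norm_ge_zero order_trans zero_le_mult_iff)
  then show "F \<in> Bd dX dY"
    using linear_bound_of_mcont_at_zero_normed[OF mX assms(4) \<open>norm_on sY nY\<close> _ \<open>B > 0\<close>]
      \<open>mcont dX dY F\<close> \<open>\<forall>y z. dY y z = nY (y - z)\<close> Bd_iff_linear_bound[OF mX]
    unfolding mcont_def by blast
qed

end
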